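(* Let $\mathcal{H}$ be a complex Hilbert space, $A\in\mathcal{B}(\mathcal{H})$ positive and $S\in\mathcal{B}_A(\mathcal{H})$. Then $$d\omega_A^2(S)\le \omega_A^2\left(S^{\sharp_A}S+S\right)+\left\|\left(S^{\sharp_A}S\right)^2+S^{\sharp_A}S\right\|_A .$$
   Context: $\mathcal{B}(\mathcal{H})$ denotes the bounded linear operators on $\mathcal{H}$. For positive $A$, $\langle x,z\rangle_A=\langle Ax,z\rangle$ and $\|z\|_A=\|A^{1/2}z\|$. $\mathcal{B}_A(\mathcal{H})$ is the set of $S\in\mathcal{B}(\mathcal{H})$ for which some $R\in\mathcal{B}(\mathcal{H})$ satisfies $AR=S^*A$; for such $S$, $S^{\sharp_A}=A^{\dagger}S^*A$ with $A^\dagger$ the Moore–Penrose inverse of $A$. For operators $T$ bounded with respect to $\|\cdot\|_A$: $\|T\|_A=\sup_{\|z\|_A=1}\|Tz\|_A$, $\omega_A(T)=\sup_{\|z\|_A=1}|\langle Tz,z\rangle_A|$, and $d\omega_A(T)=\sup_{\|z\|_A=1}(|\langle Tz,z\rangle_A|^2+\|Tz\|_A^4)^{1/2}$. *)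

theory Defs
  imports "HOL-Analysis.Analysis"
begin

class complex_inner = real_normed_vector +
  fixes scaleC :: "complex \<Rightarrow> 'a \<Rightarrow> 'a"
  fixes cinner :: "'a \<Rightarrow> 'a \<Rightarrow> complex"
  assumes scaleC_add_right: "scaleC a (x + y) = scaleC a x + scaleC a y"
    and scaleC_add_left: "scaleC (a + b) x = scaleC a x + scaleC b x"
    and scaleC_scaleC: "scaleC a (scaleC b x) = scaleC (a * b) x"
    and scaleC_one: "scaleC 1 x = x"
    and scaleC_of_real: "scaleC (complex_of_real r) x = scaleR r x"
    and cinner_commute: "cinner x y = cnj (cinner y x)"
    and cinner_add_left: "cinner (x + y) z = cinner x z + cinner y z"
    and cinner_scaleC_left: "cinner (scaleC c x) y = c * cinner x y"
    and cinner_self_nonneg: "0 \<le> Re (cinner x x)"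
    and cinner_self_eq_zero: "cinner x x = 0 \<longleftrightarrow> x = 0"
    and norm_eq_sqrt_cinner: "norm x = sqrt (Re (cinner x x))"

class chilbert_space = complex_inner + complete_space

definition bounded_clinear :: "('a::complex_inner \<Rightarrow> 'a) \<Rightarrow> bool" where
  "bounded_clinear f \<longleftrightarrow>
     (\<forall>x y. f (x + y) = f x + f y) \<and> (\<forall>c x. f (scaleC c x) = scaleC c (f x)) \<and>
     (\<exists>K. \<forall>x. norm (f x) \<le> norm x * K)"

definition positive_op :: "('a::complex_inner \<Rightarrow> 'a) \<Rightarrow> bool" where
  "positive_op A \<longleftrightarrow> bounded_clinear A \<and>
     (\<forall>x. Im (cinner (A x) x) = 0 \<and> 0 \<le> Re (cinner (A x) x))"

definition adj :: "('a::complex_inner \<Rightarrow> 'a) \<Rightarrow> ('a \<Rightarrow> 'a)" where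
  "adj S = (THE T. \<forall>x y. cinner (S x) y = cinner x (T y))"

text \<open>Moore--Penrose inverse of A, on the range of A: the unique preimage orthogonal
  to the null space of A.\<close>
definition mp_inv :: "('a::complex_inner \<Rightarrow> 'a) \<Rightarrow> 'a \<Rightarrow> 'a" where
  "mp_inv A z = (THE y. (\<forall>w. A w = 0 \<longrightarrow> cinner y w = 0) \<and> A y = z)"

definition BA :: "('a::complex_inner \<Rightarrow> 'a) \<Rightarrow> ('a \<Rightarrow> 'a) set" where
  "BA A = {S. bounded_clinear S \<and> (\<exists>R. bounded_clinear R \<and> A \<circ> R = adj S \<circ> A)}"

definition sharpA :: "('a::complex_inner \<Rightarrow> 'a) \<Rightarrow> ('a \<Rightarrow> 'a) \<Rightarrow> ('a \<Rightarrow> 'a)" where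
  "sharpA A S = mp_inv A \<circ> adj S \<circ> A"

definition ainner :: "('a::complex_inner \<Rightarrow> 'a) \<Rightarrow> 'a \<Rightarrow> 'a \<Rightarrow> complex" where
  "ainner A x z = cinner (A x) z"

definition anorm :: "('a::complex_inner \<Rightarrow> 'a) \<Rightarrow> 'a \<Rightarrow> real" where
  "anorm A z = sqrt (Re (cinner (A z) z))"

text \<open>Suprema over the A-unit sphere; 0 is adjoined (all quantities are nonnegative),
  which only matters in the degenerate case of an empty sphere (A = 0).\<close>
definition opnormA :: "('a::complex_inner \<Rightarrow> 'a) \<Rightarrow> ('a \<Rightarrow> 'a) \<Rightarrow> real" where
  "opnormA A T = Sup ({0} \<union> {anorm A (T z) | z. anorm A z = 1})"

definition omegaA :: "('a::complex_inner \<Rightarrow> 'a) \<Rightarrow> ('a \<Rightarrow> 'a) \<Rightarrow> real" where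
  "omegaA A T = Sup ({0} \<union> {cmod (ainner A (T z) z) | z. anorm A z = 1})"

definition domegaA :: "('a::complex_inner \<Rightarrow> 'a) \<Rightarrow> ('a \<Rightarrow> 'a) \<Rightarrow> real" where
  "domegaA A T = Sup ({0} \<union>
     {sqrt ((cmod (ainner A (T z) z))\<^sup>2 + (anorm A (T z)) ^ 4) | z. anorm A z = 1})"

end

theory Submission
  imports Defs
begin

text \<open>Write \<open>T = S\<^sup>\<sharp>S\<close>. Because \<open>S\<^sup>\<sharp>\<close> is an \<open>A\<close>-adjoint of \<open>S\<close>, for every \<open>z\<close> both
  \<open>\<langle>Tz, z\<rangle>\<^sub>A = \<parallel>Sz\<parallel>\<^sub>A\<^sup>2\<close> and \<open>\<langle>T\<^sup>2z, z\<rangle>\<^sub>A = \<parallel>Tz\<parallel>\<^sub>A\<^sup>2\<close> are real, and for \<open>\<parallel>z\<parallel>\<^sub>A = 1\<close> the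
  Cauchy--Schwarz inequality for the semi-inner product gives \<open>|\<langle>Sz, z\<rangle>\<^sub>A| \<le> \<parallel>Sz\<parallel>\<^sub>A\<close> and
  \<open>\<parallel>Sz\<parallel>\<^sub>A\<^sup>2 \<le> \<parallel>Tz\<parallel>\<^sub>A\<close>. Expanding \<open>|\<langle>(T + S)z, z\<rangle>\<^sub>A|\<^sup>2\<close>, the pointwise inequality
  \<open>|\<langle>Sz, z\<rangle>\<^sub>A|\<^sup>2 + \<parallel>Sz\<parallel>\<^sub>A\<^sup>4 \<le> |\<langle>(T + S)z, z\<rangle>\<^sub>A|\<^sup>2 + \<langle>(T\<^sup>2 + T)z, z\<rangle>\<^sub>A\<close> reduces to
  \<open>(\<parallel>Sz\<parallel>\<^sub>A\<^sup>2 - \<parallel>Sz\<parallel>\<^sub>A)\<^sup>2 \<ge> 0\<close>; taking suprema over the \<open>A\<close>-unit sphere gives the claim.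

  Suprema of unbounded sets of reals are junk values, so one also needs that every
  \<open>S \<in> B\<^sub>A(H)\<close> is \<open>A\<close>-bounded. If \<open>AR = S\<^sup>*A\<close>, then \<open>P = RS\<close> is \<open>A\<close>-selfadjoint, so
  \<open>\<parallel>P\<^sup>mx\<parallel>\<^sub>A\<^sup>2 \<le> \<parallel>x\<parallel>\<^sub>A \<parallel>P\<^sup>2\<^sup>mx\<parallel>\<^sub>A\<close>; iterating this as in the spectral radius formula yields
  \<open>\<parallel>Px\<parallel>\<^sub>A \<le> \<parallel>P\<parallel> \<parallel>x\<parallel>\<^sub>A\<close>, and \<open>\<parallel>Sx\<parallel>\<^sub>A\<^sup>2 = \<langle>Px, x\<rangle>\<^sub>A\<close>.\<close>

section \<open>Complex inner product spaces\<close>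

lemma cinner_zero_left [simp]: "cinner (0::'a::complex_inner) y = 0"
  using cinner_add_left[of 0 0 y] by simp

lemma cinner_zero_right [simp]: "cinner x (0::'a::complex_inner) = 0"
  using cinner_commute[of x 0] by simp

lemma scaleR_eq_scaleC: "scaleR r (x::'a::complex_inner) = scaleC (complex_of_real r) x"
  by (simp add: scaleC_of_real)

lemma cinner_minus_left [simp]: "cinner (- (x::'a::complex_inner)) y = - cinner x y"
  using cinner_scaleC_left[of "-1" x y] scaleC_of_real[of "-1" x] by simp

lemma cinner_diff_left: "cinner ((x::'a::complex_inner) - y) z = cinner x z - cinner y z"
  using cinner_add_left[of x "-y" z] by simp

lemma cinner_add_right: "cinner (x::'a::complex_inner) (y + z) = cinner x y + cinner x z"
  by (metis cinner_commute cinner_add_left complex_cnj_add)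

lemma cinner_scaleC_right: "cinner (x::'a::complex_inner) (scaleC c y) = cnj c * cinner x y"
  by (metis cinner_commute cinner_scaleC_left complex_cnj_mult)

lemma cinner_diff_right: "cinner (x::'a::complex_inner) (y - z) = cinner x y - cinner x z"
  by (metis cinner_commute cinner_diff_left complex_cnj_diff)

lemma power2_norm_eq_cinner: "(norm (x::'a::complex_inner))\<^sup>2 = Re (cinner x x)"
  using norm_eq_sqrt_cinner[of x] cinner_self_nonneg[of x] by simp

lemma scaleC_zero_right [simp]: "scaleC c (0::'a::complex_inner) = 0"
  using scaleC_add_right[of c 0 0] by simp

lemma scaleC_zero_left [simp]: "scaleC 0 (x::'a::complex_inner) = 0"
  using scaleC_of_real[of 0 x] by simp

lemma scaleC_minus_left: "scaleC (- c) (x::'a::complex_inner) = - scaleC c x"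
  by (metis add.right_inverse add_eq_0_iff scaleC_add_left scaleC_zero_left)

lemma cinner_eqI:
  fixes a b :: "'a::complex_inner"
  assumes "\<And>x. cinner x a = cinner x b"
  shows "a = b"
proof -
  have "cinner (a - b) (a - b) = 0"
    using assms[of "a - b"] by (simp add: cinner_diff_right)
  then show ?thesis by (metis cinner_self_eq_zero eq_iff_diff_eq_0)
qed

locale hermitian_form =
  fixes B :: "'a::complex_inner \<Rightarrow> 'a \<Rightarrow> complex"
  assumes add_left: "B (x + y) z = B x z + B y z"
    and scaleC_left: "B (scaleC c x) y = c * B x y"
    and hermitian: "B x y = cnj (B y x)"
begin

lemma add_right: "B x (y + z) = B x y + B x z"
  by (metis add_left hermitian complex_cnj_add)

lemma scaleC_right: "B x (scaleC c y) = cnj c * B x y"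
  by (metis scaleC_left hermitian complex_cnj_mult)

lemma Im_self: "Im (B x x) = 0"
  using hermitian[of x x] by (metis Reals_cnj_iff complex_is_Real_iff)

lemma Re_self_add_scaleC:
  fixes r :: real and x y :: 'a
  defines "t \<equiv> - (complex_of_real r * B x y)"
  shows "Re (B (x + scaleC t y) (x + scaleC t y))
           = Re (B x x) - 2 * r * (cmod (B x y))\<^sup>2 + r\<^sup>2 * (cmod (B x y))\<^sup>2 * Re (B y y)"
proof -
  define b where "b = B x y"
  have yx: "B y x = cnj b" using hermitian b_def by (metis complex_cnj_cnj)
  have yy: "B y y = complex_of_real (Re (B y y))" using Im_self[of y] by (simp add: complex_eq_iff)
  have "B (x + scaleC t y) (x + scaleC t y) = (B x x + cnj t * b) + t * (cnj b + cnj t * B y y)"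
    by (simp only: add_left add_right scaleC_left scaleC_right yx b_def) (simp add: algebra_simps)
  also have "Re \<dots> = Re (B x x) - 2 * r * (cmod b)\<^sup>2 + r\<^sup>2 * (cmod b)\<^sup>2 * Re (B y y)"
    unfolding cmod_power2 by (subst yy) (simp add: t_def b_def power2_eq_square algebra_simps)
  finally show ?thesis by (simp add: b_def)
qed

lemma Cauchy_Schwarz:
  assumes pos: "\<And>x. 0 \<le> Re (B x x)"
  shows "(cmod (B x y))\<^sup>2 \<le> Re (B x x) * Re (B y y)"
proof -
  define a where "a = Re (B x x)"
  define c where "c = (cmod (B x y))\<^sup>2"
  define d where "d = Re (B y y)"
  have quad: "0 \<le> a - 2 * r * c + r\<^sup>2 * c * d" for r :: real
    using pos Re_self_add_scaleC[where r=r and x=x and y=y] unfolding a_def c_def d_def by metis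
  have "d \<ge> 0" "c \<ge> 0" using pos by (simp_all add: d_def c_def)
  show ?thesis
  proof (cases "d > 0")
    case True
    then show ?thesis
      using quad[of "1 / d"] by (simp add: a_def c_def d_def power2_eq_square field_simps)
  next
    case False
    with \<open>d \<ge> 0\<close> have "d = 0" by simp
    then have "c \<le> 0" using quad[of "(a + 1) / (2 * c)"] \<open>c \<ge> 0\<close>
      by (cases "c = 0") (simp_all add: field_simps)
    then show ?thesis using \<open>d = 0\<close> by (simp add: c_def d_def)
  qed
qed

end

lemma hermitian_form_cinner: "hermitian_form (cinner :: 'a::complex_inner \<Rightarrow> 'a \<Rightarrow> complex)"
  by unfold_locales (simp_all add: cinner_add_left cinner_scaleC_left flip: cinner_commute)

lemma cmod_cinner_le_norm: "cmod (cinner (x::'a::complex_inner) y) \<le> norm x * norm y"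
proof -
  have "(cmod (cinner x y))\<^sup>2 \<le> (norm x * norm y)\<^sup>2"
    using hermitian_form.Cauchy_Schwarz[OF hermitian_form_cinner cinner_self_nonneg]
    by (simp add: power2_norm_eq_cinner power_mult_distrib)
  then show ?thesis by (simp add: power2_le_iff_abs_le)
qed

section \<open>Orthogonal projection and the Riesz representation\<close>

definition csubspace :: "'a::complex_inner set \<Rightarrow> bool" where
  "csubspace M \<longleftrightarrow> 0 \<in> M \<and> (\<forall>u\<in>M. \<forall>v\<in>M. u + v \<in> M) \<and> (\<forall>c. \<forall>u\<in>M. scaleC c u \<in> M)"

lemma parallelogram_law:
  fixes a b :: "'a::complex_inner"
  shows "(norm (a + b))\<^sup>2 + (norm (a - b))\<^sup>2 = 2 * (norm a)\<^sup>2 + 2 * (norm b)\<^sup>2"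
  by (simp add: power2_norm_eq_cinner cinner_add_left cinner_add_right
      cinner_diff_left cinner_diff_right)

lemma power2_norm_diff_le_near_minimum:
  fixes x :: "'a::complex_inner"
  assumes M: "csubspace M" and "a \<in> M" and "b \<in> M"
    and lower: "\<And>y. y \<in> M \<Longrightarrow> D \<le> (norm (x - y))\<^sup>2"
  shows "(norm (a - b))\<^sup>2 \<le> 2 * ((norm (x - a))\<^sup>2 - D) + 2 * ((norm (x - b))\<^sup>2 - D)"
proof -
  define c where "c = scaleR (1/2) (a + b)"
  have "c \<in> M" using assms(1-3) unfolding csubspace_def c_def scaleR_eq_scaleC by blast
  have "(x - a) + (x - b) = scaleR 2 (x - c)"
    unfolding c_def by (simp add: algebra_simps scaleR_2)
  then have sum: "(norm ((x - a) + (x - b)))\<^sup>2 = 4 * (norm (x - c))\<^sup>2"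
    by (simp add: power2_eq_square)
  have diff: "(x - a) - (x - b) = b - a" by simp
  have "(norm (a - b))\<^sup>2 = 2 * (norm (x - a))\<^sup>2 + 2 * (norm (x - b))\<^sup>2 - 4 * (norm (x - c))\<^sup>2"
    using parallelogram_law[of "x - a" "x - b", unfolded sum diff norm_minus_commute[of b]]
    by linarith
  with lower[OF \<open>c \<in> M\<close>] show ?thesis by simp
qed

lemma minimizing_sequence_Cauchy:
  fixes x :: "'a::complex_inner"
  assumes M: "csubspace M" and seq: "\<And>k. m k \<in> M"
    and lower: "\<And>y. y \<in> M \<Longrightarrow> D \<le> (norm (x - y))\<^sup>2"
    and close: "\<And>k. (norm (x - m k))\<^sup>2 < D + 1 / real (Suc k)"
  shows "Cauchy m"
proof -
  have dist_bound: "(norm (m i - m j))\<^sup>2 \<le> 2 / real (Suc i) + 2 / real (Suc j)" for i j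
    using power2_norm_diff_le_near_minimum[OF M seq seq lower, of i j] close[of i] close[of j]
    by simp
  show ?thesis
  proof (rule CauchyI)
    fix e :: real
    assume "0 < e"
    obtain N :: nat where N: "4 / e\<^sup>2 < real N" using reals_Archimedean2 by blast
    have "norm (m i - m j) < e" if "i \<ge> N" "j \<ge> N" for i j
    proof -
      have shrink: "2 / real (Suc k) \<le> 2 / real (Suc N)" if "k \<ge> N" for k
        by (rule frac_le) (use that in auto)
      have "(norm (m i - m j))\<^sup>2 \<le> 2 / real (Suc N) + 2 / real (Suc N)"
        using dist_bound[of i j] shrink[OF \<open>i \<ge> N\<close>] shrink[OF \<open>j \<ge> N\<close>] by linarith
      also have "\<dots> = 4 / real (Suc N)" by simp
      also have "\<dots> < e\<^sup>2"
      proof -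
        have "4 < real N * e\<^sup>2" using N \<open>0 < e\<close> by (simp add: pos_divide_less_eq)
        also have "\<dots> \<le> e\<^sup>2 * real (Suc N)" by (simp add: algebra_simps)
        finally show ?thesis by (simp only: pos_divide_less_eq of_nat_0_less_iff zero_less_Suc)
      qed
      finally show ?thesis using \<open>0 < e\<close> by (auto intro: power2_less_imp_less)
    qed
    then show "\<exists>N. \<forall>i\<ge>N. \<forall>j\<ge>N. norm (m i - m j) < e" by blast
  qed
qed

lemma exists_nearest_point:
  fixes x :: "'a::chilbert_space"
  assumes "closed M" and "csubspace M"
  shows "\<exists>p\<in>M. \<forall>y\<in>M. norm (x - p) \<le> norm (x - y)"
proof -
  define D where "D = Inf ((\<lambda>y. (norm (x - y))\<^sup>2) ` M)"
  have "0 \<in> M" using \<open>csubspace M\<close> unfolding csubspace_def by blast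
  have bdd: "bdd_below ((\<lambda>y. (norm (x - y))\<^sup>2) ` M)" by (rule bdd_belowI[where m=0]) auto
  have lower: "D \<le> (norm (x - y))\<^sup>2" if "y \<in> M" for y
    unfolding D_def using bdd that by (simp add: cInf_lower)
  have "\<exists>y\<in>M. (norm (x - y))\<^sup>2 < D + 1 / real (Suc k)" for k
    using cInf_lessD[of "(\<lambda>y. (norm (x - y))\<^sup>2) ` M" "D + 1 / real (Suc k)"] \<open>0 \<in> M\<close>
    unfolding D_def by auto
  then obtain m where m: "\<And>k. m k \<in> M" "\<And>k. (norm (x - m k))\<^sup>2 < D + 1 / real (Suc k)"
    by metis
  obtain p where "m \<longlonglongrightarrow> p"
    using minimizing_sequence_Cauchy[OF \<open>csubspace M\<close> m(1) lower m(2)]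
    by (auto simp: Cauchy_convergent_iff convergent_def)
  have "p \<in> M" by (rule closed_sequentially[OF \<open>closed M\<close> m(1) \<open>m \<longlonglongrightarrow> p\<close>])
  have "(\<lambda>k. (norm (x - m k))\<^sup>2) \<longlonglongrightarrow> (norm (x - p))\<^sup>2"
    by (intro tendsto_intros \<open>m \<longlonglongrightarrow> p\<close>)
  moreover have "(\<lambda>k. D + 1 / real (Suc k)) \<longlonglongrightarrow> D"
    using tendsto_add[OF tendsto_const LIMSEQ_Suc[OF lim_inverse_n']]
    by (simp add: inverse_eq_divide)
  ultimately have "(norm (x - p))\<^sup>2 \<le> D"
    by (rule LIMSEQ_le) (use m(2) in \<open>auto intro: less_imp_le\<close>)
  then have "norm (x - p) \<le> norm (x - y)" if "y \<in> M" for y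
    using lower[OF that] by (simp add: power2_le_imp_le)
  with \<open>p \<in> M\<close> show ?thesis by blast
qed

lemma nearest_point_orthogonal:
  fixes x :: "'a::complex_inner"
  assumes "csubspace M" and "p \<in> M" and nearest: "\<And>y. y \<in> M \<Longrightarrow> norm (x - p) \<le> norm (x - y)"
    and "y \<in> M"
  shows "cinner (x - p) y = 0"
proof -
  define b where "b = cinner (x - p) y"
  define r where "r = 1 / ((norm y)\<^sup>2 + 1)"
  have "0 < (norm y)\<^sup>2 + 1" by (simp add: add_nonneg_pos)
  then have "r > 0" "r * (norm y)\<^sup>2 < 1" by (simp_all add: r_def)
  define t where "t = - (complex_of_real r * b)"
  have "p + scaleC (- t) y \<in> M"
    using assms(1,2,4) unfolding csubspace_def by blast
  moreover have "x - (p + scaleC (- t) y) = (x - p) + scaleC t y" by (simp add: scaleC_minus_left)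
  ultimately have "(norm (x - p))\<^sup>2 \<le> (norm ((x - p) + scaleC t y))\<^sup>2"
    using nearest by (metis norm_ge_zero power_mono)
  also have "\<dots> = (norm (x - p))\<^sup>2 - 2 * r * (cmod b)\<^sup>2 + r\<^sup>2 * (cmod b)\<^sup>2 * (norm y)\<^sup>2"
    unfolding power2_norm_eq_cinner t_def b_def
    by (rule hermitian_form.Re_self_add_scaleC[OF hermitian_form_cinner])
  finally have "0 \<le> r * (cmod b)\<^sup>2 * (r * (norm y)\<^sup>2 - 2)"
    by (simp add: algebra_simps power2_eq_square)
  with \<open>r > 0\<close> \<open>r * (norm y)\<^sup>2 < 1\<close> have "(cmod b)\<^sup>2 \<le> 0"
    by (smt (verit) mult_pos_neg zero_le_power2 mult_pos_pos)
  then show ?thesis by (simp add: b_def)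
qed

lemma exists_orthogonal_projection:
  fixes x :: "'a::chilbert_space"
  assumes "closed M" and "csubspace M"
  shows "\<exists>p\<in>M. \<forall>y\<in>M. cinner (x - p) y = 0"
  using exists_nearest_point[OF assms] nearest_point_orthogonal[OF assms(2)] by metis

lemma bounded_clinear_imp_bounded_linear:
  assumes "bounded_clinear f"
  shows "bounded_linear f"
proof -
  obtain K where "\<forall>x. norm (f x) \<le> norm x * K"
    using assms unfolding bounded_clinear_def by blast
  with assms show ?thesis
    unfolding bounded_clinear_def
    by (intro bounded_linear_intro[where K=K]) (auto simp: scaleR_eq_scaleC)
qed

lemma bounded_clinear_posbound:
  assumes "bounded_clinear f"
  obtains K where "K > 0" "\<And>x. norm (f x) \<le> norm x * K"
proof -
  obtain K where K: "\<forall>x. norm (f x) \<le> norm x * K" using assms unfolding bounded_clinear_def by blast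
  have "norm (f x) \<le> norm x * max K 1" for x
    using K[rule_format, of x] by (meson max.cobounded1 mult_left_mono norm_ge_zero order_trans)
  then show ?thesis using that[of "max K 1"] by simp
qed

lemma closed_csubspace_kernel:
  assumes "bounded_clinear f"
  shows "closed {x. f x = 0}" and "csubspace {x. f x = 0}"
proof -
  interpret bounded_linear f by (rule bounded_clinear_imp_bounded_linear[OF assms])
  show "closed {x. f x = 0}" by (intro closed_Collect_eq continuous_on continuous_on_id continuous_on_const)
  show "csubspace {x. f x = 0}" using assms unfolding csubspace_def bounded_clinear_def by simp
qed

lemma bounded_linear_cinner_left_comp:
  fixes S :: "'a::complex_inner \<Rightarrow> 'a"
  assumes "bounded_clinear S"
  shows "bounded_linear (\<lambda>x. cinner (S x) y)"
proof -
  obtain K where K: "\<forall>x. norm (S x) \<le> norm x * K" using assms unfolding bounded_clinear_def by blast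
  have "cmod (cinner (S x) y) \<le> norm x * (K * norm y)" for x
    using cmod_cinner_le_norm[of "S x" y] K mult_right_mono[of "norm (S x)" "norm x * K" "norm y"]
    by (simp add: mult.assoc)
  with assms show ?thesis
    unfolding bounded_clinear_def
    by (intro bounded_linear_intro[where K="K * norm y"])
       (auto simp: scaleR_eq_scaleC cinner_add_left cinner_scaleC_left scaleR_conv_of_real)
qed

lemma riesz_representation:
  fixes \<phi> :: "'a::chilbert_space \<Rightarrow> complex"
  assumes "bounded_linear \<phi>" and hom: "\<And>c x. \<phi> (scaleC c x) = c * \<phi> x"
  shows "\<exists>w. \<forall>x. \<phi> x = cinner x w"
proof (cases "\<forall>x. \<phi> x = 0")
  case True
  then show ?thesis by (intro exI[of _ 0]) simp
next
  case False
  interpret bounded_linear \<phi> by fact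
  define N where "N = {x. \<phi> x = 0}"
  have "closed N" unfolding N_def
    by (intro closed_Collect_eq continuous_on continuous_on_id continuous_on_const)
  moreover have "csubspace N" unfolding N_def csubspace_def by (simp add: add hom)
  moreover obtain v where "\<phi> v \<noteq> 0" using False by blast
  ultimately obtain p where "p \<in> N" and orth: "\<forall>y\<in>N. cinner (v - p) y = 0"
    using exists_orthogonal_projection by blast
  define u where "u = v - p"
  have "\<phi> u \<noteq> 0" using \<open>\<phi> v \<noteq> 0\<close> \<open>p \<in> N\<close> by (simp add: u_def N_def diff)
  then have "cinner u u \<noteq> 0" by (auto simp: cinner_self_eq_zero zero)
  have "\<phi> x = cinner x (scaleC (cnj (\<phi> u / cinner u u)) u)" for x
  proof -
    have "scaleC (\<phi> u) x - scaleC (\<phi> x) u \<in> N"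
      by (simp add: N_def diff hom)
    then have "cinner u (scaleC (\<phi> u) x - scaleC (\<phi> x) u) = 0"
      using orth by (simp add: u_def)
    then have "\<phi> u * cinner x u = \<phi> x * cinner u u"
      by (metis cinner_commute cinner_diff_left cinner_scaleC_left complex_cnj_zero eq_iff_diff_eq_0)
    with \<open>cinner u u \<noteq> 0\<close> show ?thesis by (simp add: cinner_scaleC_right field_simps)
  qed
  then show ?thesis by blast
qed

lemma cinner_adj:
  fixes S :: "'a::chilbert_space \<Rightarrow> 'a"
  assumes "bounded_clinear S"
  shows "cinner (S x) y = cinner x (adj S y)"
proof -
  have "\<exists>w. \<forall>x. cinner (S x) y = cinner x w" for y
    using assms by (intro riesz_representation bounded_linear_cinner_left_comp)
                   (simp_all add: bounded_clinear_def cinner_scaleC_left)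
  then obtain T where T: "\<And>x y. cinner (S x) y = cinner x (T y)" by metis
  have "adj S = T" unfolding adj_def
  proof (rule the_equality)
    fix T' assume "\<forall>x y. cinner (S x) y = cinner x (T' y)"
    then show "T' = T" using T by (intro ext cinner_eqI) metis
  qed (use T in blast)
  with T show ?thesis by simp
qed

lemma mp_inv_inverse_on_range:
  fixes A :: "'a::chilbert_space \<Rightarrow> 'a"
  assumes "bounded_clinear A"
  shows "A (mp_inv A (A w)) = A w"
proof -
  interpret bounded_linear A by (rule bounded_clinear_imp_bounded_linear[OF assms])
  obtain p where "A p = 0" and orth: "\<And>v. A v = 0 \<Longrightarrow> cinner (w - p) v = 0"
    using exists_orthogonal_projection[OF closed_csubspace_kernel[OF assms]] by blast
  have "mp_inv A (A w) = w - p" unfolding mp_inv_def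
  proof (rule the_equality)
    show "(\<forall>v. A v = 0 \<longrightarrow> cinner (w - p) v = 0) \<and> A (w - p) = A w"
      using orth \<open>A p = 0\<close> by (simp add: diff)
  next
    fix y assume y: "(\<forall>v. A v = 0 \<longrightarrow> cinner y v = 0) \<and> A y = A w"
    then have "A (y - (w - p)) = 0" using \<open>A p = 0\<close> by (simp add: diff)
    then have "cinner (y - (w - p)) (y - (w - p)) = 0"
      using y orth by (simp add: cinner_diff_left)
    then show "y = w - p" by (simp add: cinner_self_eq_zero)
  qed
  then show ?thesis using \<open>A p = 0\<close> by (simp add: diff)
qed

section \<open>Positive operators and the \<open>A\<close>-seminorm\<close>

context
  fixes A :: "'a::complex_inner \<Rightarrow> 'a"
  assumes posA: "positive_op A"
begin

lemma positive_op_add: "A (x + y) = A x + A y"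
  and positive_op_scaleC: "A (scaleC c x) = scaleC c (A x)"
  using posA unfolding positive_op_def bounded_clinear_def by blast+

text \<open>Polarisation: only the reality of \<open>\<langle>Ax, x\<rangle>\<close> is used, not its sign.\<close>
lemma positive_op_hermitian: "cinner (A x) y = cinner x (A y)"
proof -
  define B where "B u v = cinner (A u) v" for u v
  have real: "Im (B u u) = 0" for u using posA unfolding B_def positive_op_def by blast
  have "B (x + y) (x + y) = B x x + B x y + B y x + B y y"
    unfolding B_def by (simp add: positive_op_add cinner_add_left cinner_add_right)
  then have "Im (B x y) + Im (B y x) = 0" using real[of "x + y"] real[of x] real[of y] by simp
  moreover have "B (x + scaleC \<i> y) (x + scaleC \<i> y) = B x x - \<i> * B x y + \<i> * B y x + B y y"
    unfolding B_def
    by (simp add: positive_op_add positive_op_scaleC cinner_add_left cinner_add_right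
        cinner_scaleC_left cinner_scaleC_right algebra_simps)
  then have "Re (B y x) - Re (B x y) = 0" using real[of "x + scaleC \<i> y"] real[of x] real[of y] by simp
  ultimately have "B x y = cnj (B y x)" by (simp add: complex_eq_iff)
  then show ?thesis unfolding B_def by (metis cinner_commute)
qed

lemma hermitian_form_positive_op: "hermitian_form (\<lambda>u v. cinner (A u) v)"
  by unfold_locales
     (simp_all add: positive_op_add positive_op_scaleC cinner_add_left cinner_scaleC_left
       positive_op_hermitian flip: cinner_commute)

lemma anorm_nonneg: "0 \<le> anorm A x"
  and power2_anorm: "(anorm A x)\<^sup>2 = Re (cinner (A x) x)"
  using posA unfolding positive_op_def anorm_def by simp_all

lemma cinner_A_self: "cinner (A x) x = complex_of_real ((anorm A x)\<^sup>2)"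
  using posA unfolding positive_op_def by (simp add: power2_anorm complex_eq_iff)

lemma cmod_cinner_A_le_anorm: "cmod (cinner (A x) y) \<le> anorm A x * anorm A y"
proof -
  have "(cmod (cinner (A x) y))\<^sup>2 \<le> (anorm A x * anorm A y)\<^sup>2"
    using hermitian_form.Cauchy_Schwarz[OF hermitian_form_positive_op, of x y]
    by (simp add: power2_anorm[symmetric] power_mult_distrib)
  then show ?thesis using anorm_nonneg by (simp add: power2_le_iff_abs_le)
qed

lemma Re_cinner_A_le_anorm: "Re (cinner (A x) y) \<le> anorm A x * anorm A y"
  using complex_Re_le_cmod cmod_cinner_A_le_anorm order_trans by blast

lemma anorm_triangle: "anorm A (x + y) \<le> anorm A x + anorm A y"
proof -
  have "(anorm A (x + y))\<^sup>2 = (anorm A x)\<^sup>2 + (anorm A y)\<^sup>2 + Re (cinner (A x) y) + Re (cinner (A y) x)"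
    by (simp add: power2_anorm positive_op_add cinner_add_left cinner_add_right)
  also have "\<dots> \<le> (anorm A x + anorm A y)\<^sup>2"
    using Re_cinner_A_le_anorm[of x y] Re_cinner_A_le_anorm[of y x]
    by (simp add: power2_eq_square algebra_simps)
  finally show ?thesis using anorm_nonneg by (simp add: power2_le_iff_abs_le)
qed

lemma anorm_le_norm: obtains C where "\<And>z. anorm A z \<le> C * norm z"
proof -
  obtain K where K: "\<And>z. norm (A z) \<le> norm z * K"
    using posA unfolding positive_op_def bounded_clinear_def by blast
  have "(anorm A z)\<^sup>2 \<le> (sqrt \<bar>K\<bar> * norm z)\<^sup>2" for z
  proof -
    have "(anorm A z)\<^sup>2 \<le> norm (A z) * norm z"
      using power2_anorm[of z] complex_Re_le_cmod cmod_cinner_le_norm[of "A z" z] by (metis order_trans)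
    also have "\<dots> \<le> norm z * \<bar>K\<bar> * norm z"
      using K[of z] mult_left_mono[OF abs_ge_self[of K] norm_ge_zero[of z]]
      by (intro mult_right_mono) auto
    finally have "(anorm A z)\<^sup>2 \<le> \<bar>K\<bar> * (norm z)\<^sup>2" by (simp add: power2_eq_square mult_ac)
    then show ?thesis by (simp add: power_mult_distrib)
  qed
  then show ?thesis using that[of "sqrt \<bar>K\<bar>"] by (simp add: power2_le_iff_abs_le anorm_nonneg)
qed

end

section \<open>\<open>A\<close>-bounded operators\<close>

definition A_bounded :: "('a::complex_inner \<Rightarrow> 'a) \<Rightarrow> ('a \<Rightarrow> 'a) \<Rightarrow> bool" where
  "A_bounded A T \<longleftrightarrow> (\<exists>K\<ge>0. \<forall>x. anorm A (T x) \<le> K * anorm A x)"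

lemma A_bounded_comp:
  assumes "A_bounded A T" and "A_bounded A U"
  shows "A_bounded A (\<lambda>x. T (U x))"
proof -
  obtain K L where "K \<ge> 0" "\<And>x. anorm A (T x) \<le> K * anorm A x"
    and "L \<ge> 0" "\<And>x. anorm A (U x) \<le> L * anorm A x"
    using assms unfolding A_bounded_def by blast
  then have "anorm A (T (U x)) \<le> (K * L) * anorm A x" for x
    by (metis mult.assoc mult_left_mono order_trans)
  with \<open>K \<ge> 0\<close> \<open>L \<ge> 0\<close> show ?thesis unfolding A_bounded_def by (metis zero_le_mult_iff)
qed

lemma A_bounded_add:
  assumes "positive_op A" and "A_bounded A T" and "A_bounded A U"
  shows "A_bounded A (\<lambda>x. T x + U x)"
proof -
  obtain K L where "K \<ge> 0" "\<And>x. anorm A (T x) \<le> K * anorm A x"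
    and "L \<ge> 0" "\<And>x. anorm A (U x) \<le> L * anorm A x"
    using assms unfolding A_bounded_def by blast
  then have "anorm A (T x + U x) \<le> (K + L) * anorm A x" for x
    using anorm_triangle[OF assms(1), of "T x" "U x"] by (simp add: distrib_right add_mono order_trans)
  with \<open>K \<ge> 0\<close> \<open>L \<ge> 0\<close> show ?thesis unfolding A_bounded_def by (metis add_nonneg_nonneg)
qed

text \<open>The real-variable core of the spectral-radius argument: under the condition
  \<open>h(m)\<^sup>2 \<le> h(0) h(2m)\<close>, the ratio \<open>h(1)/h(0)\<close> raised to the power \<open>2\<^sup>n\<close> is at most \<open>h(2\<^sup>n)/h(0)\<close>,
  so boundedness of \<open>h\<close> forces the ratio to be at most 1.\<close>
lemma le_of_square_le_doubling:
  fixes h :: "nat \<Rightarrow> real"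
  assumes nonneg: "\<And>n. 0 \<le> h n" and sq: "\<And>m. (h m)\<^sup>2 \<le> h 0 * h (2 * m)"
    and bounded: "\<And>n. h n \<le> C"
  shows "h 1 \<le> h 0"
proof (cases "h 0 = 0")
  case True
  then show ?thesis using sq[of 1] nonneg[of 1] by simp
next
  case False
  with nonneg[of 0] have "h 0 > 0" by simp
  define q where "q = h 1 / h 0"
  have "q ^ (2 ^ n) \<le> h (2 ^ n) / h 0" for n
  proof (induction n)
    case 0
    then show ?case by (simp add: q_def)
  next
    case (Suc n)
    have "q ^ (2 ^ Suc n) = (q ^ (2 ^ n))\<^sup>2" by (simp add: power_mult[symmetric] mult.commute)
    also have "\<dots> \<le> (h (2 ^ n) / h 0)\<^sup>2"
      using Suc.IH \<open>h 0 > 0\<close> nonneg[of 1] by (intro power_mono) (simp_all add: q_def)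
    also have "\<dots> \<le> h (2 ^ Suc n) / h 0"
      using sq[of "2 ^ n"] \<open>h 0 > 0\<close> by (simp add: power_divide power2_eq_square field_simps)
    finally show ?case .
  qed
  then have "q ^ (2 ^ n) \<le> C / h 0" for n
    using bounded[of "2 ^ n"] \<open>h 0 > 0\<close> by (meson divide_right_mono less_imp_le order_trans)
  have "q \<le> 1"
  proof (rule ccontr)
    assume "\<not> q \<le> 1"
    then obtain n where "C / h 0 < q ^ n" using real_arch_pow by fastforce
    also have "\<dots> \<le> q ^ (2 ^ n)" using \<open>\<not> q \<le> 1\<close> by (intro power_increasing) auto
    finally show False using \<open>q ^ (2 ^ n) \<le> C / h 0\<close> by simp
  qed
  then show ?thesis using \<open>h 0 > 0\<close> by (simp add: q_def divide_le_eq)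
qed

context
  fixes A P :: "'a::complex_inner \<Rightarrow> 'a"
  assumes selfadj: "\<And>u v. cinner (A (P u)) v = cinner (A u) (P v)"
begin

lemma cinner_A_funpow_selfadjoint: "cinner (A ((P ^^ n) u)) v = cinner (A u) ((P ^^ n) v)"
proof (induction n arbitrary: u v)
  case 0
  then show ?case by simp
next
  case (Suc n)
  have "cinner (A ((P ^^ Suc n) u)) v = cinner (A ((P ^^ n) u)) (P v)"
    by (simp add: selfadj)
  also have "\<dots> = cinner (A u) ((P ^^ Suc n) v)"
    by (simp add: Suc.IH funpow_Suc_right del: funpow.simps)
  finally show ?case .
qed

lemma power2_anorm_funpow_le:
  assumes posA: "positive_op A"
  shows "(anorm A ((P ^^ m) x))\<^sup>2 \<le> anorm A x * anorm A ((P ^^ (2 * m)) x)"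
proof -
  have "(anorm A ((P ^^ m) x))\<^sup>2 = Re (cinner (A x) ((P ^^ m) ((P ^^ m) x)))"
    by (simp add: power2_anorm[OF posA] cinner_A_funpow_selfadjoint)
  also have "\<dots> \<le> anorm A x * anorm A ((P ^^ (2 * m)) x)"
    using Re_cinner_A_le_anorm[OF posA] by (simp add: mult_2 funpow_add)
  finally show ?thesis .
qed

text \<open>The weights \<open>\<parallel>P\<^sup>n x\<parallel>\<^sub>A / K\<^sup>n\<close> are bounded and satisfy the hypothesis of the doubling lemma.\<close>
lemma anorm_selfadjoint_le:
  assumes posA: "positive_op A" and "K > 0" and normP: "\<And>x. norm (P x) \<le> norm x * K"
  shows "anorm A (P x) \<le> K * anorm A x"
proof -
  define h where "h n = anorm A ((P ^^ n) x) / K ^ n" for n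
  obtain C where C: "\<And>z. anorm A z \<le> C * norm z" using anorm_le_norm[OF posA] by blast
  have "norm ((P ^^ n) x) \<le> K ^ n * norm x" for n
  proof (induction n)
    case (Suc n)
    have "norm ((P ^^ Suc n) x) \<le> norm ((P ^^ n) x) * K" using normP by simp
    also have "\<dots> \<le> K ^ n * norm x * K" using Suc.IH \<open>K > 0\<close> by (simp add: mult_right_mono)
    finally show ?case by (simp add: mult_ac)
  qed simp
  then have "anorm A ((P ^^ n) x) \<le> \<bar>C\<bar> * (K ^ n * norm x)" for n
    using C[of "(P ^^ n) x"] abs_ge_self[of C]
    by (meson abs_ge_zero mult_left_mono mult_right_mono norm_ge_zero order_trans)
  then have "h n \<le> \<bar>C\<bar> * norm x" for n
    using \<open>K > 0\<close> by (simp add: h_def divide_le_eq mult_ac)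
  moreover have "(h m)\<^sup>2 \<le> h 0 * h (2 * m)" for m
    using power2_anorm_funpow_le[OF posA, of m x] \<open>K > 0\<close>
    by (simp add: h_def power_divide power_mult[symmetric] mult.commute[of m 2] divide_right_mono)
  moreover have "0 \<le> h n" for n using \<open>K > 0\<close> by (simp add: h_def anorm_nonneg[OF posA])
  ultimately have "h 1 \<le> h 0" by (intro le_of_square_le_doubling)
  then show ?thesis using \<open>K > 0\<close> by (simp add: h_def divide_le_eq mult.commute)
qed

end

lemma cinner_A_intertwiner:
  fixes A S R :: "'a::chilbert_space \<Rightarrow> 'a"
  assumes "bounded_clinear S" and "A \<circ> R = adj S \<circ> A"
  shows "cinner (A (R u)) v = cinner (A u) (S v)"
proof -
  have "A (R u) = adj S (A u)" using assms(2) by (metis comp_apply)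
  then show ?thesis by (metis cinner_adj[OF assms(1)] cinner_commute)
qed

lemma cinner_A_intertwiner_comp:
  fixes A S R :: "'a::chilbert_space \<Rightarrow> 'a"
  assumes "positive_op A" and "bounded_clinear S" and "A \<circ> R = adj S \<circ> A"
  shows "cinner (A (R (S u))) v = cinner (A u) (R (S v))"
proof -
  have RS: "cinner (A (R (S w))) y = cinner (A (S w)) (S y)" for w y
    by (rule cinner_A_intertwiner[OF assms(2,3)])
  have "cinner (A u) (R (S v)) = cnj (cinner (A (R (S v))) u)"
    by (metis cinner_commute positive_op_hermitian[OF assms(1)])
  also have "\<dots> = cinner (A (S u)) (S v)"
    by (metis RS cinner_commute positive_op_hermitian[OF assms(1)])
  finally show ?thesis by (simp add: RS)
qed

context
  fixes A S :: "'a::chilbert_space \<Rightarrow> 'a"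
  assumes posA: "positive_op A" and S: "S \<in> BA A"
begin

lemma A_bounded_BA: "A_bounded A S"
proof -
  obtain R where "bounded_clinear S" "bounded_clinear R" and AR: "A \<circ> R = adj S \<circ> A"
    using S unfolding BA_def by blast
  define P where "P x = R (S x)" for x
  obtain KS KR where "KS > 0" "\<And>x. norm (S x) \<le> norm x * KS"
    and "KR > 0" "\<And>x. norm (R x) \<le> norm x * KR"
    using bounded_clinear_posbound \<open>bounded_clinear S\<close> \<open>bounded_clinear R\<close> by metis
  define K where "K = KS * KR"
  have "K > 0" using \<open>KS > 0\<close> \<open>KR > 0\<close> by (simp add: K_def)
  have "norm (P x) \<le> norm x * K" for x
  proof -
    have "norm (P x) \<le> norm (S x) * KR" unfolding P_def by fact
    also have "\<dots> \<le> norm x * KS * KR" using \<open>KR > 0\<close> \<open>norm (S x) \<le> norm x * KS\<close> by simp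
    finally show ?thesis by (simp add: K_def mult.assoc)
  qed
  moreover have "cinner (A (P u)) v = cinner (A u) (P v)" for u v
    unfolding P_def by (rule cinner_A_intertwiner_comp[OF posA \<open>bounded_clinear S\<close> AR])
  ultimately have P: "anorm A (P x) \<le> K * anorm A x" for x
    using anorm_selfadjoint_le[OF _ posA \<open>K > 0\<close>] by blast
  have "(anorm A (S x))\<^sup>2 \<le> (sqrt K * anorm A x)\<^sup>2" for x
  proof -
    have "(anorm A (S x))\<^sup>2 = Re (cinner (A (P x)) x)"
      by (simp add: power2_anorm[OF posA] P_def cinner_A_intertwiner[OF \<open>bounded_clinear S\<close> AR])
    also have "\<dots> \<le> K * anorm A x * anorm A x"
      using Re_cinner_A_le_anorm[OF posA] P anorm_nonneg[OF posA]
      by (meson mult_right_mono order_trans)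
    also have "\<dots> = (sqrt K * anorm A x)\<^sup>2"
      using \<open>K > 0\<close> by (simp add: power_mult_distrib power2_eq_square[of "anorm A x"])
    finally show ?thesis .
  qed
  then show ?thesis
    unfolding A_bounded_def using anorm_nonneg[OF posA] \<open>K > 0\<close>
    by (metis power2_le_imp_le real_sqrt_ge_zero mult_nonneg_nonneg less_imp_le)
qed

lemma A_comp_sharpA: "A \<circ> sharpA A S = adj S \<circ> A"
proof
  fix x
  obtain R where "bounded_clinear R" and "A \<circ> R = adj S \<circ> A" using S unfolding BA_def by blast
  then have "adj S (A x) = A (R x)" by (metis comp_apply)
  then show "(A \<circ> sharpA A S) x = (adj S \<circ> A) x"
    using mp_inv_inverse_on_range[of A "R x"] posA by (simp add: sharpA_def positive_op_def)
qed

lemma cinner_A_sharpA: "cinner (A (sharpA A S u)) v = cinner (A u) (S v)"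
  using S A_comp_sharpA unfolding BA_def by (blast intro: cinner_A_intertwiner)

lemma cinner_A_sharpA_right: "cinner (A u) (sharpA A S v) = cinner (A (S u)) v"
  by (metis cinner_A_sharpA cinner_commute positive_op_hermitian[OF posA])

end

lemma A_bounded_A_adjoint:
  assumes posA: "positive_op A" and "A_bounded A S"
    and adj: "\<And>u v. cinner (A (W u)) v = cinner (A u) (S v)"
  shows "A_bounded A W"
proof -
  obtain K where "K \<ge> 0" and K: "\<And>x. anorm A (S x) \<le> K * anorm A x"
    using \<open>A_bounded A S\<close> unfolding A_bounded_def by blast
  have "anorm A (W y) \<le> K * anorm A y" for y
  proof -
    have "(anorm A (W y))\<^sup>2 = Re (cinner (A y) (S (W y)))"
      by (simp add: power2_anorm[OF posA] adj)
    also have "\<dots> \<le> anorm A y * (K * anorm A (W y))"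
      using Re_cinner_A_le_anorm[OF posA] K anorm_nonneg[OF posA]
      by (meson mult_left_mono order_trans)
    finally have "anorm A (W y) * anorm A (W y) \<le> (K * anorm A y) * anorm A (W y)"
      by (simp add: power2_eq_square mult_ac)
    then show ?thesis
      using anorm_nonneg[OF posA, of "W y"] \<open>K \<ge> 0\<close> anorm_nonneg[OF posA, of y]
      by (cases "anorm A (W y) = 0") simp_all
  qed
  with \<open>K \<ge> 0\<close> show ?thesis unfolding A_bounded_def by blast
qed

lemma A_bounded_sharpA:
  fixes A S :: "'a::chilbert_space \<Rightarrow> 'a"
  assumes "positive_op A" and "S \<in> BA A"
  shows "A_bounded A (sharpA A S)"
  using A_bounded_A_adjoint[OF assms(1) A_bounded_BA[OF assms], of "sharpA A S"]
    cinner_A_sharpA[OF assms] by blast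

section \<open>Suprema over the \<open>A\<close>-unit sphere\<close>

lemma Sup_insert_zero_upper:
  fixes f :: "'b \<Rightarrow> real"
  assumes "\<And>z. P z \<Longrightarrow> f z \<le> M"
  shows "P z \<Longrightarrow> f z \<le> Sup ({0} \<union> {f z | z. P z})"
    and "0 \<le> Sup ({0} \<union> {f z | z. P z})"
proof -
  have "bdd_above ({0} \<union> {f z | z. P z})"
    using assms by (intro bdd_aboveI[where M="max M 0"]) (auto simp: le_max_iff_disj)
  then show "P z \<Longrightarrow> f z \<le> Sup ({0} \<union> {f z | z. P z})" "0 \<le> Sup ({0} \<union> {f z | z. P z})"
    by (auto intro: cSup_upper)
qed

context
  fixes A T :: "'a::complex_inner \<Rightarrow> 'a"
  assumes bounded: "A_bounded A T"
begin

lemma anorm_le_on_sphere: obtains K where "\<And>z. anorm A z = 1 \<Longrightarrow> anorm A (T z) \<le> K"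
proof -
  obtain K where K: "\<And>x. anorm A (T x) \<le> K * anorm A x" using bounded unfolding A_bounded_def by blast
  have "anorm A (T z) \<le> K" if "anorm A z = 1" for z using K[of z] that by simp
  then show ?thesis by (rule that)
qed

lemma anorm_le_opnormA:
  assumes "anorm A z = 1"
  shows "anorm A (T z) \<le> opnormA A T"
proof -
  obtain K where "\<And>z. anorm A z = 1 \<Longrightarrow> anorm A (T z) \<le> K" using anorm_le_on_sphere by blast
  then show ?thesis unfolding opnormA_def using assms by (rule Sup_insert_zero_upper(1))
qed

lemma opnormA_nonneg: "0 \<le> opnormA A T"
proof -
  obtain K where "\<And>z. anorm A z = 1 \<Longrightarrow> anorm A (T z) \<le> K" using anorm_le_on_sphere by blast
  then show ?thesis unfolding opnormA_def by (rule Sup_insert_zero_upper(2))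
qed

lemma cmod_ainner_le_omegaA:
  assumes posA: "positive_op A" and "anorm A z = 1"
  shows "cmod (ainner A (T z) z) \<le> omegaA A T"
proof -
  obtain K where K: "\<And>z. anorm A z = 1 \<Longrightarrow> anorm A (T z) \<le> K" using anorm_le_on_sphere by blast
  have "cmod (ainner A (T z) z) \<le> K" if "anorm A z = 1" for z
    using cmod_cinner_A_le_anorm[OF posA, of "T z" z] K[OF that] that by (simp add: ainner_def)
  then show ?thesis unfolding omegaA_def using \<open>anorm A z = 1\<close> by (rule Sup_insert_zero_upper(1))
qed

end

lemma power2_domegaA_le:
  assumes "\<And>z. anorm A z = 1 \<Longrightarrow> (cmod (ainner A (T z) z))\<^sup>2 + (anorm A (T z)) ^ 4 \<le> C"
    and "0 \<le> C"
  shows "(domegaA A T)\<^sup>2 \<le> C"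
proof -
  have bound: "sqrt ((cmod (ainner A (T z) z))\<^sup>2 + (anorm A (T z)) ^ 4) \<le> sqrt C" if "anorm A z = 1" for z
    using assms(1)[OF that] by (rule real_sqrt_le_mono)
  have "domegaA A T \<le> sqrt C"
    unfolding domegaA_def by (rule cSup_least) (use bound \<open>0 \<le> C\<close> in auto)
  moreover have "0 \<le> domegaA A T"
    unfolding domegaA_def using bound by (rule Sup_insert_zero_upper(2))
  ultimately have "(domegaA A T)\<^sup>2 \<le> (sqrt C)\<^sup>2" by (rule power_mono)
  then show ?thesis using \<open>0 \<le> C\<close> by simp
qed

text \<open>With \<open>s\<^sup>2 \<le> t\<close> and \<open>Re b \<ge> -s\<close>, the difference of the two sides is at least \<open>(s\<^sup>2 - s)\<^sup>2\<close>.\<close>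
lemma cmod_power2_add_power4_le:
  fixes b :: complex and s t :: real
  assumes "cmod b \<le> s" and "s\<^sup>2 \<le> t"
  shows "(cmod b)\<^sup>2 + s ^ 4 \<le> (cmod (complex_of_real (s\<^sup>2) + b))\<^sup>2 + (t\<^sup>2 + s\<^sup>2)"
proof -
  have "s \<ge> 0" using assms(1) norm_ge_zero order_trans by blast
  have "- s \<le> Re b" using assms(1) abs_Re_le_cmod[of b] by linarith
  then have "- 2 * s ^ 3 \<le> 2 * s\<^sup>2 * Re b"
    using mult_left_mono[of "- s" "Re b" "2 * s\<^sup>2"] by (simp add: power2_eq_square power3_eq_cube)
  moreover have "s ^ 4 \<le> t\<^sup>2"
    using power_mono[OF assms(2), of 2] \<open>s \<ge> 0\<close> by (simp flip: power_mult)
  moreover have "0 \<le> (s\<^sup>2 - s)\<^sup>2" by simp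
  moreover have "(cmod (complex_of_real (s\<^sup>2) + b))\<^sup>2 = (s\<^sup>2 + Re b)\<^sup>2 + (Im b)\<^sup>2"
    and "(cmod b)\<^sup>2 = (Re b)\<^sup>2 + (Im b)\<^sup>2"
    by (simp_all add: cmod_power2)
  ultimately show ?thesis
    by (simp add: power2_eq_square power3_eq_cube power4_eq_xxxx algebra_simps)
qed

lemma power2_cmod_ainner_power4_le:
  fixes A S :: "'a::chilbert_space \<Rightarrow> 'a"
  assumes posA: "positive_op A" and S: "S \<in> BA A" and z: "anorm A z = 1"
  shows "(cmod (ainner A (S z) z))\<^sup>2 + (anorm A (S z)) ^ 4
           \<le> (cmod (ainner A ((sharpA A S \<circ> S) z + S z) z))\<^sup>2
              + anorm A ((sharpA A S \<circ> S) ((sharpA A S \<circ> S) z) + (sharpA A S \<circ> S) z)"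
proof -
  define T where "T = sharpA A S \<circ> S"
  define s where "s = anorm A (S z)"
  define t where "t = anorm A (T z)"
  have T_self: "cinner (A (T z)) z = complex_of_real (s\<^sup>2)"
    unfolding T_def s_def by (simp add: cinner_A_sharpA[OF posA S] cinner_A_self[OF posA])
  have TT_self: "cinner (A (T (T z))) z = complex_of_real (t\<^sup>2)"
  proof -
    have "cinner (A (T (T z))) z = cinner (A (S (T z))) (S z)"
      unfolding T_def by (simp add: cinner_A_sharpA[OF posA S])
    also have "\<dots> = cinner (A (T z)) (T z)"
      unfolding T_def by (simp add: cinner_A_sharpA_right[OF posA S])
    finally show ?thesis unfolding t_def by (simp add: cinner_A_self[OF posA])
  qed
  have "cmod (cinner (A (S z)) z) \<le> s"
    using cmod_cinner_A_le_anorm[OF posA, of "S z" z] z by (simp add: s_def)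
  moreover have "s\<^sup>2 \<le> t"
    using Re_cinner_A_le_anorm[OF posA, of "T z" z] z by (simp add: T_self t_def)
  moreover have "t\<^sup>2 + s\<^sup>2 \<le> anorm A (T (T z) + T z)"
    using Re_cinner_A_le_anorm[OF posA, of "T (T z) + T z" z] z
    by (simp add: positive_op_add[OF posA] cinner_add_left T_self TT_self)
  ultimately show ?thesis
    using cmod_power2_add_power4_le[of "cinner (A (S z)) z" s t]
    by (simp add: ainner_def T_def[symmetric] s_def positive_op_add[OF posA] cinner_add_left T_self)
qed

theorem corollary2p4:
  fixes A S :: "'a::chilbert_space \<Rightarrow> 'a"
  assumes "positive_op A"
    and "S \<in> BA A"
  shows "(domegaA A S)\<^sup>2 \<le>
           (omegaA A (\<lambda>x. (sharpA A S \<circ> S) x + S x))\<^sup>2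
           + opnormA A (\<lambda>x. (sharpA A S \<circ> S) ((sharpA A S \<circ> S) x) + (sharpA A S \<circ> S) x)"
proof -
  let ?T = "sharpA A S \<circ> S"
  have S: "A_bounded A S" using assms by (rule A_bounded_BA)
  have T: "A_bounded A ?T"
    using A_bounded_comp[OF A_bounded_sharpA[OF assms] S] by (simp add: comp_def)
  have W1: "A_bounded A (\<lambda>x. ?T x + S x)" by (rule A_bounded_add[OF assms(1) T S])
  have W2: "A_bounded A (\<lambda>x. ?T (?T x) + ?T x)"
    by (rule A_bounded_add[OF assms(1) A_bounded_comp[OF T T] T])
  show ?thesis
  proof (rule power2_domegaA_le)
    fix z
    assume z: "anorm A z = 1"
    have "(cmod (ainner A (?T z + S z) z))\<^sup>2 \<le> (omegaA A (\<lambda>x. ?T x + S x))\<^sup>2"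
      using cmod_ainner_le_omegaA[OF W1 assms(1) z] by (simp add: power_mono)
    then show "(cmod (ainner A (S z) z))\<^sup>2 + (anorm A (S z)) ^ 4
        \<le> (omegaA A (\<lambda>x. ?T x + S x))\<^sup>2 + opnormA A (\<lambda>x. ?T (?T x) + ?T x)"
      using power2_cmod_ainner_power4_le[OF assms z] anorm_le_opnormA[OF W2 z] by simp
  qed (rule add_nonneg_nonneg[OF zero_le_power2 opnormA_nonneg[OF W2]])
qed

end
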